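(* There is an absolute constant $C>0$ such that the following holds. Let $\lambda\vdash n$ and $\mu\vdash\Delta$ (with $\Delta\in\mathbb{N}$) be partitions with $\mu=\lambda\backslash\lambda_1$, and let $\pi\in S_n$. Then \[ \left|\chi_\lambda(\pi)-\chi_\mu(1)\binom{c_1(\pi)}{\Delta}\right|\leq C\,\chi_\mu(1)\sum_{j=1}^{\Delta}\binom{c_1(\pi)+\cdots+c_{j+1}(\pi)}{\Delta-j}. \]
   Context: For a partition $\lambda=(\lambda_1,\ldots,\lambda_l)\vdash n$ (with $\lambda_1\geq\cdots\geq\lambda_l\geq 1$), $\lambda\backslash\lambda_1:=(\lambda_2,\ldots,\lambda_l)$. $\chi_\lambda$ is the irreducible character of $S_n$ indexed by $\lambda$, and $\chi_\mu(1)$ is the degree of the irreducible character of $S_\Delta$ indexed by $\mu$. For $\pi\in S_n$ and $i\geq 1$, $c_i(\pi)$ denotes the number of $i$-cycles of $\pi$ (so $c_i(\pi)=0$ for $i>n$). *)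

theory Defs
  imports "HOL-Combinatorics.Combinatorics" "HOL-Library.FuncSet"
begin

definition is_partition :: "nat list \<Rightarrow> nat \<Rightarrow> bool" where
  "is_partition lam n \<longleftrightarrow> sorted_wrt (\<ge>) lam \<and> (\<forall>x\<in>set lam. 0 < x) \<and> sum_list lam = n"

text \<open>Permutations of S_n are permutations of {..<n}; their cycles are the orbits.\<close>
definition cycles_of :: "nat \<Rightarrow> (nat \<Rightarrow> nat) \<Rightarrow> nat set set" where
  "cycles_of n \<pi> = (\<lambda>x. orbit \<pi> x) ` {..<n}"

definition cyc_count :: "nat \<Rightarrow> (nat \<Rightarrow> nat) \<Rightarrow> nat \<Rightarrow> nat" where
  "cyc_count n \<pi> i = card {c \<in> cycles_of n \<pi>. card c = i}"

text \<open>Coefficient of x^alpha in the product of power sums p_{|c|}(x_0,...,x_{l-1}) over cycles c: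
  number of ways to assign each cycle to a variable with the prescribed exponents.\<close>
definition frob_count :: "nat set set \<Rightarrow> nat \<Rightarrow> (nat \<Rightarrow> int) \<Rightarrow> nat" where
  "frob_count Cs l \<alpha> = card {f \<in> Cs \<rightarrow>\<^sub>E {..<l}. \<forall>i<l. int (\<Sum>c\<in>{c\<in>Cs. f c = i}. card c) = \<alpha> i}"

text \<open>Irreducible character chi_lambda of S_n (n = |lambda|) at pi, via the Frobenius formula:
  chi_lambda(pi) = coefficient of x^(lambda+delta) in a_delta * prod_c p_{|c|}.\<close>
definition character :: "nat list \<Rightarrow> (nat \<Rightarrow> nat) \<Rightarrow> int" where
  "character lam \<pi> =
     (let n = sum_list lam; l = length lam; \<delta> = (\<lambda>i::nat. int l - 1 - int i) in
      \<Sum>\<sigma>\<in>{\<sigma>. \<sigma> permutes {..<l}}.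
        sign \<sigma> * int (frob_count (cycles_of n \<pi>) l (\<lambda>i. int (lam ! i) + \<delta> i - \<delta> (\<sigma> i))))"

end

theory Submission
  imports Defs
begin

text \<open>Expand \<open>\<chi>\<^sub>\<lambda>(\<pi>)\<close> by the Frobenius formula and split off the cycles put into the first row.
  If the other rows receive a set \<open>U\<close> of cycles of total length \<open>\<parallel>U\<parallel>\<close>, the load of the first row
  forces \<open>\<sigma>(0) = \<Delta> - \<parallel>U\<parallel>\<close>, so \<open>\<chi>\<^sub>\<lambda>(\<pi>)\<close> becomes a sum over the sets \<open>U\<close> with \<open>\<parallel>U\<parallel> \<le> \<Delta>\<close> of
  alternating sums over the remaining rows. Induction on \<open>U\<close> bounds each of them by a number of
  paths lowering the beta-set of \<open>\<mu>\<close> towards the staircase, which is at most the number \<open>\<chi>\<^sub>\<mu>(1)\<close>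
  of standard Young tableaux of \<open>\<mu>\<close>, with equality when \<open>U\<close> consists of \<open>\<Delta>\<close> fixed points. There
  are \<open>binom(c\<^sub>1, \<Delta>)\<close> such \<open>U\<close>; every other \<open>U\<close> has \<open>\<Delta> - j < \<Delta>\<close> cycles, all of length at most
  \<open>j + 1\<close>, which gives the error term with \<open>C = 1\<close>.\<close>

section \<open>Lowering paths\<close>

text \<open>From the beta-set \<open>{\<mu>\<^sub>i + \<delta>\<^sub>i}\<close> of a partition \<open>\<mu>\<close> down to the staircase \<open>{\<delta>\<^sub>i}\<close>
  these are the standard Young tableaux of \<open>\<mu>\<close> read backwards.\<close>
fun lower_paths :: "int set \<Rightarrow> int set \<Rightarrow> nat \<Rightarrow> nat" where
  "lower_paths V B 0 = (if V = B then 1 else 0)"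
| "lower_paths V B (Suc m) = (\<Sum>x\<in>{x\<in>V. x - 1 \<notin> V}. lower_paths (insert (x - 1) (V - {x})) B m)"

abbreviation lower :: "int set \<Rightarrow> int \<Rightarrow> nat \<Rightarrow> int set" where
  "lower V x r \<equiv> insert (x - int r) (V - {x})"

lemma lower_paths_concat:
  assumes "finite V" "finite S"
  shows "(\<Sum>W\<in>S. lower_paths V W r * lower_paths W B m) \<le> lower_paths V B (r + m)"
  using assms(1)
proof (induction r arbitrary: V)
  case 0
  have "(\<Sum>W\<in>S. lower_paths V W 0 * lower_paths W B m) = (\<Sum>W\<in>S. if W = V then lower_paths V B m else 0)"
    by (intro sum.cong) auto
  also have "\<dots> \<le> lower_paths V B m"
    using assms(2) by (cases "V \<in> S") auto
  finally show ?case by simp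
next
  case (Suc r)
  let ?X = "{x\<in>V. x - 1 \<notin> V}"
  have "(\<Sum>W\<in>S. lower_paths V W (Suc r) * lower_paths W B m)
      = (\<Sum>x\<in>?X. \<Sum>W\<in>S. lower_paths (lower V x 1) W r * lower_paths W B m)"
    by (simp add: sum_distrib_right sum.swap[of _ S])
  also have "\<dots> \<le> (\<Sum>x\<in>?X. lower_paths (lower V x 1) B (r + m))"
    by (intro sum_mono Suc.IH) (use Suc.prems in auto)
  also have "\<dots> = lower_paths V B (Suc r + m)" by simp
  finally show ?case .
qed

lemma lower_paths_le_concat:
  assumes "finite V" "lower_paths W B m \<ge> 1"
  shows "lower_paths V W r \<le> lower_paths V B (r + m)"
proof -
  have "lower_paths V W r \<le> lower_paths V W r * lower_paths W B m"
    using assms(2) by simp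
  also have "\<dots> \<le> lower_paths V B (r + m)"
    using lower_paths_concat[OF assms(1), of "{W}"] by simp
  finally show ?thesis .
qed

lemma lower_paths_step_le:
  assumes "finite V" "x \<in> V" "x - 1 \<notin> V"
  shows "lower_paths (lower V x 1) B m \<le> lower_paths V B (Suc m)"
  using assms by (simp, intro member_le_sum[of x, simplified]) auto

text \<open>A jump of \<open>x\<close> by \<open>r\<close> can be performed by \<open>r\<close> unit moves: if \<open>x - 1 \<in> V\<close>, first let
  \<open>x - 1\<close> jump by \<open>r - 1\<close> and then move \<open>x\<close> into the freed place.\<close>
lemma lower_paths_jump_ge_1:
  assumes "finite V" "x \<in> V" "x - int r \<notin> V"
  shows "lower_paths V (lower V x r) r \<ge> 1"
  using assms
proof (induction r arbitrary: x V)
  case 0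
  then show ?case by simp
next
  case (Suc r)
  show ?case
  proof (cases "x - 1 \<in> V")
    case False
    have "insert (x - 1 - int r) (lower V x 1 - {x - 1}) = lower V x (Suc r)"
      using False by auto
    then have "lower_paths (lower V x 1) (lower V x (Suc r)) r \<ge> 1"
      using Suc.IH[of "lower V x 1" "x - 1"] Suc.prems False by (cases "r = 0") (auto simp: algebra_simps)
    also have "lower_paths (lower V x 1) (lower V x (Suc r)) r \<le> lower_paths V (lower V x (Suc r)) (Suc r)"
      by (rule lower_paths_step_le) (use Suc.prems False in auto)
    finally show ?thesis .
  next
    case True
    let ?W = "lower V (x - 1) r"
    have "lower_paths V ?W r \<ge> 1"
      using Suc.IH[of V "x - 1"] Suc.prems True by (auto simp: algebra_simps)
    moreover have "r \<noteq> 0"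
      using True Suc.prems(3) by (cases r) auto
    then have "lower ?W x 1 = lower V x (Suc r)" "x \<in> ?W" "x - 1 \<notin> ?W"
      using True Suc.prems by auto
    then have "lower_paths ?W (lower V x (Suc r)) 1 \<ge> 1"
      using lower_paths_step_le[of ?W x "lower V x (Suc r)" 0] Suc.prems by simp
    ultimately show ?thesis
      using lower_paths_le_concat[of V ?W "lower V x (Suc r)" 1 r] Suc.prems by simp
  qed
qed

lemma lower_paths_jumps_le:
  assumes "finite V" "r \<ge> 1"
  shows "(\<Sum>x\<in>{x\<in>V. x - int r \<notin> V}. lower_paths (lower V x r) B m) \<le> lower_paths V B (r + m)"
proof -
  let ?X = "{x\<in>V. x - int r \<notin> V}"
  have "(\<Sum>x\<in>?X. lower_paths (lower V x r) B m)
      \<le> (\<Sum>x\<in>?X. lower_paths V (lower V x r) r * lower_paths (lower V x r) B m)"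
    using lower_paths_jump_ge_1[OF assms(1)] by (intro sum_mono) simp
  also have "\<dots> = (\<Sum>W\<in>(\<lambda>x. lower V x r) ` ?X. lower_paths V W r * lower_paths W B m)"
  proof (rule sum.reindex[symmetric, unfolded comp_def], rule inj_onI)
    fix x y assume "x \<in> ?X" "y \<in> ?X" "lower V x r = lower V y r"
    moreover have "y \<notin> lower V y r"
      using assms(2) by simp
    ultimately show "x = y"
      by auto
  qed
  also have "\<dots> \<le> lower_paths V B (r + m)"
    by (rule lower_paths_concat) (use assms in auto)
  finally show ?thesis .
qed

section \<open>Distributing cycles among rows\<close>

definition load_count :: "'a set set \<Rightarrow> 'b set \<Rightarrow> ('b \<Rightarrow> int) \<Rightarrow> nat" where
  "load_count U A \<alpha> = card {f \<in> U \<rightarrow>\<^sub>E A. \<forall>i\<in>A. int (sum card {c\<in>U. f c = i}) = \<alpha> i}"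

lemma frob_count_eq_load_count: "frob_count Cs l \<alpha> = load_count Cs {..<l} \<alpha>"
  unfolding frob_count_def load_count_def by (simp only: Ball_def lessThan_iff)

lemma load_count_cong: "(\<And>i. i \<in> A \<Longrightarrow> \<alpha> i = \<alpha>' i) \<Longrightarrow> load_count U A \<alpha> = load_count U A \<alpha>'"
  unfolding load_count_def by (intro arg_cong[where f=card]) auto

lemma load_count_empty: "load_count {} A \<alpha> = (if \<forall>i\<in>A. \<alpha> i = 0 then 1 else 0)"
  unfolding load_count_def by auto

lemma sum_card_fibre_fun_upd:
  assumes "finite U" "c \<notin> U"
  shows "sum card {d\<in>insert c U. (g(c := i)) d = j} = sum card {d\<in>U. g d = j} + (if j = i then card c else 0)"
proof -
  have "{d\<in>insert c U. (g(c := i)) d = j} = (if i = j then insert c {d\<in>U. g d = j} else {d\<in>U. g d = j})"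
    using assms(2) by auto
  then show ?thesis
    using assms by auto
qed

lemma load_count_insert:
  assumes "finite U" "c \<notin> U" "finite A"
  shows "load_count (insert c U) A \<alpha> = (\<Sum>i\<in>A. load_count U A (\<alpha>(i := \<alpha> i - int (card c))))"
proof -
  define S where "S = {f \<in> insert c U \<rightarrow>\<^sub>E A. \<forall>j\<in>A. int (sum card {d\<in>insert c U. f d = j}) = \<alpha> j}"
  define T where "T i = {g \<in> U \<rightarrow>\<^sub>E A. \<forall>j\<in>A. int (sum card {d\<in>U. g d = j}) = (\<alpha>(i := \<alpha> i - int (card c))) j}"
    for i
  have bij: "bij_betw (\<lambda>(i, g). g(c := i)) (SIGMA i:A. T i) S"
  proof (rule bij_betw_byWitness[where f' = "\<lambda>f. (f c, f(c := undefined))"])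
    show "\<forall>a\<in>SIGMA i:A. T i. (\<lambda>f. (f c, f(c := undefined))) ((\<lambda>(i, g). g(c := i)) a) = a"
      using assms(2) by (auto simp: T_def PiE_def extensional_def)
    show "\<forall>f\<in>S. (\<lambda>(i, g). g(c := i)) (f c, f(c := undefined)) = f"
      by auto
    show "(\<lambda>(i, g). g(c := i)) ` (SIGMA i:A. T i) \<subseteq> S"
    proof clarify
      fix i g assume i: "i \<in> A" and g: "g \<in> T i"
      have "int (sum card {d\<in>insert c U. (g(c := i)) d = j}) = \<alpha> j" if "j \<in> A" for j
        using g that unfolding sum_card_fibre_fun_upd[OF assms(1,2)] T_def by (cases "j = i") auto
      moreover have "g(c := i) \<in> insert c U \<rightarrow>\<^sub>E A"
        using g i by (auto simp: T_def PiE_def extensional_def)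
      ultimately show "g(c := i) \<in> S"
        unfolding S_def by blast
    qed
    show "(\<lambda>f. (f c, f(c := undefined))) ` S \<subseteq> (SIGMA i:A. T i)"
    proof (rule image_subsetI)
      fix f assume f: "f \<in> S"
      have restr: "{d\<in>U. (f(c := undefined)) d = j} = {d\<in>U. f d = j}" for j
        using assms(2) by auto
      have load: "sum card {d\<in>insert c U. f d = j} = sum card {d\<in>U. f d = j} + (if j = f c then card c else 0)" for j
        using sum_card_fibre_fun_upd[OF assms(1,2), of "f(c := undefined)" "f c" j] unfolding restr by simp
      have "int (sum card {d\<in>U. (f(c := undefined)) d = j}) = (\<alpha>(f c := \<alpha> (f c) - int (card c))) j"
        if "j \<in> A" for j
      proof -
        have "int (sum card {d\<in>insert c U. f d = j}) = \<alpha> j"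
          using f that unfolding S_def by blast
        then show ?thesis
          unfolding restr using load[of j] by (cases "j = f c") (simp_all del: of_nat_sum)
      qed
      moreover have "f c \<in> A" "f(c := undefined) \<in> U \<rightarrow>\<^sub>E A"
        using f assms(2) by (auto simp: S_def PiE_def extensional_def)
      ultimately show "(f c, f(c := undefined)) \<in> (SIGMA i:A. T i)"
        unfolding T_def by blast
    qed
  qed
  have "finite (T i)" for i
    unfolding T_def using assms by (intro finite_subset[OF _ finite_PiE[of U "\<lambda>_. A"]]) auto
  then have "card S = (\<Sum>i\<in>A. card (T i))"
    using bij_betw_same_card[OF bij] assms(3) by simp
  then show ?thesis
    unfolding load_count_def S_def T_def .
qed

lemma load_count_permute:
  fixes U :: "'a set set" and A :: "'b set"
  assumes "\<tau> permutes A"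
  shows "load_count U A (\<alpha> \<circ> \<tau>) = load_count U A \<alpha>"
proof -
  define S where "S \<alpha> = {f \<in> U \<rightarrow>\<^sub>E A. \<forall>i\<in>A. int (sum card {c\<in>U. f c = i}) = \<alpha> i}" for \<alpha>
  have move: "restrict (\<rho> \<circ> f) U \<in> S \<alpha>" if "\<rho> permutes A" "f \<in> S (\<alpha> \<circ> \<rho>)" for \<rho> f \<alpha>
    unfolding S_def
  proof (intro CollectI conjI ballI)
    show "restrict (\<rho> \<circ> f) U \<in> U \<rightarrow>\<^sub>E A"
      using that permutes_in_image[OF that(1)] by (auto simp: S_def)
    fix i assume i: "i \<in> A"
    have "{c\<in>U. restrict (\<rho> \<circ> f) U c = i} = {c\<in>U. f c = inv \<rho> i}"
      by (auto simp: permutes_inverses[OF that(1)])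
    moreover have "inv \<rho> i \<in> A" "\<rho> (inv \<rho> i) = i"
      using i permutes_inverses[OF that(1)] permutes_in_image[OF permutes_inv[OF that(1)]] by auto
    ultimately show "int (sum card {c\<in>U. restrict (\<rho> \<circ> f) U c = i}) = \<alpha> i"
      using that(2) by (force simp: S_def)
  qed
  have cancel: "\<alpha> \<circ> \<tau> \<circ> inv \<tau> = \<alpha>"
    using permutes_inverses(1)[OF assms] by (auto simp: fun_eq_iff)
  have "bij_betw (\<lambda>f. restrict (\<tau> \<circ> f) U) (S (\<alpha> \<circ> \<tau>)) (S \<alpha>)"
  proof (rule bij_betw_byWitness[where f' = "\<lambda>f. restrict (inv \<tau> \<circ> f) U"])
    show "\<forall>f\<in>S (\<alpha> \<circ> \<tau>). restrict (inv \<tau> \<circ> restrict (\<tau> \<circ> f) U) U = f"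
      using permutes_inverses(2)[OF assms] by (auto simp: S_def PiE_def extensional_def)
    show "\<forall>f\<in>S \<alpha>. restrict (\<tau> \<circ> restrict (inv \<tau> \<circ> f) U) U = f"
      using permutes_inverses(1)[OF assms] by (auto simp: S_def PiE_def extensional_def)
    show "(\<lambda>f. restrict (\<tau> \<circ> f) U) ` S (\<alpha> \<circ> \<tau>) \<subseteq> S \<alpha>"
      using move[OF assms] by blast
    show "(\<lambda>f. restrict (inv \<tau> \<circ> f) U) ` S \<alpha> \<subseteq> S (\<alpha> \<circ> \<tau>)"
      using move[OF permutes_inv[OF assms], of _ "\<alpha> \<circ> \<tau>"] cancel by auto
  qed
  then show ?thesis
    unfolding load_count_def S_def by (rule bij_betw_same_card)
qed

lemma load_count_insert_row:
  assumes "finite Cs" "finite A" "a \<notin> A"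
  shows "load_count Cs (insert a A) \<alpha>
    = (\<Sum>U\<in>Pow Cs. if int (sum card (Cs - U)) = \<alpha> a then load_count U A \<alpha> else 0)"
proof -
  define S where "S = {f \<in> Cs \<rightarrow>\<^sub>E insert a A. \<forall>i\<in>insert a A. int (sum card {c\<in>Cs. f c = i}) = \<alpha> i}"
  define I where "I = {U \<in> Pow Cs. int (sum card (Cs - U)) = \<alpha> a}"
  define T where "T U = {g \<in> U \<rightarrow>\<^sub>E A. \<forall>i\<in>A. int (sum card {c\<in>U. g c = i}) = \<alpha> i}"
    for U :: "'a set set"
  define join where "join = (\<lambda>(U, g) c. if c \<in> Cs - U then a else g c)"
  define rest where "rest f = {c\<in>Cs. f c \<noteq> a}" for f :: "'a set \<Rightarrow> 'b"
  have bij: "bij_betw join (SIGMA U:I. T U) S"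
  proof (rule bij_betw_byWitness[where f' = "\<lambda>f. (rest f, restrict f (rest f))"])
    show "\<forall>p\<in>SIGMA U:I. T U. (rest (join p), restrict (join p) (rest (join p))) = p"
    proof
      fix p assume "p \<in> (SIGMA U:I. T U)"
      then obtain U g where p: "p = (U, g)" "U \<in> I" "g \<in> T U" by blast
      then have "rest (join p) = U" "restrict (join p) U = g"
        using assms(3) by (auto simp: I_def T_def join_def rest_def PiE_def extensional_def)
      then show "(rest (join p), restrict (join p) (rest (join p))) = p"
        using p by simp
    qed
    show "\<forall>f\<in>S. join (rest f, restrict f (rest f)) = f"
      by (auto simp: S_def join_def rest_def PiE_def extensional_def)
    show "join ` (SIGMA U:I. T U) \<subseteq> S"
    proof (rule image_subsetI)
      fix p assume "p \<in> (SIGMA U:I. T U)"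
      then obtain U g where p: "p = (U, g)" "U \<in> I" "g \<in> T U" by blast
      have "{c\<in>Cs. join p c = a} = Cs - U"
        using p assms(3) by (auto simp: I_def T_def join_def)
      moreover have "{c\<in>Cs. join p c = i} = {c\<in>U. g c = i}" if "i \<in> A" for i
        using p that assms(3) by (auto simp: I_def T_def join_def)
      moreover have "join p \<in> Cs \<rightarrow>\<^sub>E insert a A"
        using p by (auto simp: I_def T_def join_def PiE_def Pi_iff extensional_def)
      ultimately show "join p \<in> S"
        using p by (auto simp: S_def I_def T_def)
    qed
    show "(\<lambda>f. (rest f, restrict f (rest f))) ` S \<subseteq> (SIGMA U:I. T U)"
    proof (rule image_subsetI)
      fix f assume f: "f \<in> S"
      have "Cs - rest f = {c\<in>Cs. f c = a}"
        by (auto simp: rest_def)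
      moreover have "{c\<in>rest f. restrict f (rest f) c = i} = {c\<in>Cs. f c = i}" if "i \<in> A" for i
        using that assms(3) by (auto simp: rest_def)
      moreover have "restrict f (rest f) \<in> rest f \<rightarrow>\<^sub>E A"
        using f by (auto simp: S_def rest_def)
      ultimately show "(rest f, restrict f (rest f)) \<in> (SIGMA U:I. T U)"
        using f by (auto simp: S_def I_def T_def rest_def)
    qed
  qed
  have "finite (T U)" if "U \<in> I" for U
    using that assms(1,2) unfolding I_def T_def
    by (intro finite_subset[OF _ finite_PiE[of U "\<lambda>_. A"]]) (auto intro: finite_subset)
  then have fin: "finite I" "\<forall>U\<in>I. finite (T U)"
    using assms(1) by (auto simp: I_def)
  have "card S = (\<Sum>U\<in>I. card (T U))"
    using bij_betw_same_card[OF bij] card_SigmaI[OF fin] by simp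
  also have "\<dots> = (\<Sum>U\<in>Pow Cs. if int (sum card (Cs - U)) = \<alpha> a then load_count U A \<alpha> else 0)"
    unfolding I_def T_def load_count_def[symmetric] by (rule sum.inter_filter) (simp add: assms(1))
  finally show ?thesis
    unfolding load_count_def S_def .
qed

lemma load_count_split_row:
  assumes "finite Cs" "finite A" "a \<in> A"
  shows "load_count Cs A \<alpha>
    = (\<Sum>U\<in>Pow Cs. if int (sum card (Cs - U)) = \<alpha> a then load_count U (A - {a}) \<alpha> else 0)"
  using load_count_insert_row[OF assms(1), of "A - {a}" a \<alpha>] assms(2,3) by (simp add: insert_absorb)

section \<open>Alternants\<close>

definition staircase :: "nat \<Rightarrow> nat \<Rightarrow> int" where
  "staircase l i = int l - 1 - int i"

lemma staircase_eq_iff [simp]: "staircase l i = staircase l j \<longleftrightarrow> i = j"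
  unfolding staircase_def by auto

lemma lower_paths_staircase_hole:
  assumes "k < l"
  shows "lower_paths (staircase l ` ({..<l} - {k})) (staircase l ` ({..<l} - {0})) k \<ge> 1"
proof (cases "k = 0")
  case False
  let ?V = "staircase l ` ({..<l} - {k})"
  have hole: "staircase l 0 - int k = staircase l k"
    by (simp add: staircase_def)
  have "lower ?V (staircase l 0) k = staircase l ` ({..<l} - {0})"
    unfolding hole using assms False by auto
  moreover have "lower_paths ?V (lower ?V (staircase l 0) k) k \<ge> 1"
    by (rule lower_paths_jump_ge_1) (use assms False in \<open>auto simp: hole\<close>)
  ultimately show ?thesis
    by simp
qed simp

text \<open>The Frobenius sum with the rows restricted to \<open>A\<close> and the permutations to \<open>P\<close>: for \<open>P\<close>
  all permutations of \<open>A = {..<l}\<close> it is the coefficient of \<open>x^\<beta>\<close> in \<open>a_\<delta> \<cdot> \<Prod>c\<in>U. p_|c|\<close>.\<close>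
definition alternant :: "nat \<Rightarrow> nat set \<Rightarrow> (nat \<Rightarrow> nat) set \<Rightarrow> (nat \<Rightarrow> int) \<Rightarrow> 'a set set \<Rightarrow> int" where
  "alternant l A P \<beta> U = (\<Sum>\<sigma>\<in>P. sign \<sigma> * int (load_count U A (\<lambda>i. \<beta> i - staircase l (\<sigma> i))))"

lemma alternant_insert:
  assumes "finite U" "c \<notin> U" "finite A"
  shows "alternant l A P \<beta> (insert c U) = (\<Sum>i\<in>A. alternant l A P (\<beta>(i := \<beta> i - int (card c))) U)"
proof -
  have "alternant l A P \<beta> (insert c U) = (\<Sum>\<sigma>\<in>P. \<Sum>i\<in>A. sign \<sigma> *
      int (load_count U A (\<lambda>j. (\<beta>(i := \<beta> i - int (card c))) j - staircase l (\<sigma> j))))"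
    unfolding alternant_def load_count_insert[OF assms] sum_distrib_left of_nat_sum
    by (intro sum.cong refl arg_cong2[where f="(*)"] arg_cong[where f=int] load_count_cong) auto
  then show ?thesis
    unfolding alternant_def by (simp add: sum.swap[of _ A])
qed

lemma alternant_empty_eq_0:
  assumes "\<forall>\<sigma>\<in>P. \<exists>i\<in>A. \<beta> i \<noteq> staircase l (\<sigma> i)"
  shows "alternant l A P \<beta> {} = 0"
  using assms unfolding alternant_def load_count_empty by (intro sum.neutral) auto

lemma sum_update_image_lower:
  fixes \<beta> :: "'a \<Rightarrow> int"
  assumes "finite A" "inj_on \<beta> A" "r \<ge> 1"
  shows "(\<Sum>i\<in>A. if inj_on (\<beta>(i := \<beta> i - int r)) A then h ((\<beta>(i := \<beta> i - int r)) ` A) else 0)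
       = (\<Sum>x\<in>{x\<in>\<beta> ` A. x - int r \<notin> \<beta> ` A}. h (lower (\<beta> ` A) x r))"
proof -
  have "(\<Sum>x\<in>{x\<in>\<beta> ` A. x - int r \<notin> \<beta> ` A}. h (lower (\<beta> ` A) x r))
      = (\<Sum>i\<in>A. if \<beta> i - int r \<notin> \<beta> ` A then h (insert (\<beta> i - int r) (\<beta> ` A - {\<beta> i})) else 0)"
    using assms(1,2) by (simp add: sum.inter_filter sum.reindex)
  also have "\<dots> = (\<Sum>i\<in>A. if inj_on (\<beta>(i := \<beta> i - int r)) A then h ((\<beta>(i := \<beta> i - int r)) ` A) else 0)"
  proof (intro sum.cong refl)
    fix i assume i: "i \<in> A"
    have "inj_on (\<beta>(i := \<beta> i - int r)) A \<longleftrightarrow> \<beta> i - int r \<notin> \<beta> ` A"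
    proof
      assume inj: "inj_on (\<beta>(i := \<beta> i - int r)) A"
      show "\<beta> i - int r \<notin> \<beta> ` A"
      proof
        assume "\<beta> i - int r \<in> \<beta> ` A"
        then obtain j where "j \<in> A" "\<beta> j = \<beta> i - int r" by auto
        moreover have "j \<noteq> i" using calculation assms(3) by auto
        ultimately show False
          using inj_onD[OF inj, of i j] i by simp
      qed
    qed (use assms(2) in \<open>auto intro: inj_on_fun_updI\<close>)
    moreover have "(\<beta>(i := \<beta> i - int r)) ` A = insert (\<beta> i - int r) (\<beta> ` A - {\<beta> i})"
      using i inj_on_image_set_diff[OF assms(2), of A "{i}"] by (simp only: fun_upd_image) auto
    ultimately show "(if \<beta> i - int r \<notin> \<beta> ` A then h (insert (\<beta> i - int r) (\<beta> ` A - {\<beta> i})) else 0)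
        = (if inj_on (\<beta>(i := \<beta> i - int r)) A then h ((\<beta>(i := \<beta> i - int r)) ` A) else 0)"
      by simp
  qed
  finally show ?thesis ..
qed

lemma strict_antimono_on_image_eq:
  fixes \<beta> \<gamma> :: "nat \<Rightarrow> 'b::linorder"
  assumes "finite A" "strict_antimono_on A \<beta>" "strict_antimono_on A \<gamma>" "\<beta> ` A = \<gamma> ` A" "i \<in> A"
  shows "\<beta> i = \<gamma> i"
proof -
  define xs where "xs = sorted_list_of_set A"
  have "sorted_wrt (<) (rev (map f xs))" if "strict_antimono_on A f" for f :: "nat \<Rightarrow> 'b"
    using that unfolding sorted_wrt_rev sorted_wrt_map xs_def
    by (intro sorted_wrt_mono_rel[OF _ strict_sorted_list_of_set]) (auto simp: monotone_on_def assms(1))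
  then have "rev (map \<beta> xs) = rev (map \<gamma> xs)"
    using assms(1-4) by (intro strict_sorted_equal) (auto simp: xs_def)
  then show ?thesis
    using assms(1,5) by (simp add: xs_def)
qed

lemma strict_antimono_on_fun_upd_decr:
  fixes \<beta> :: "'a::linorder \<Rightarrow> int"
  assumes "strict_antimono_on A \<beta>" "inj_on (\<beta>(i := \<beta> i - 1)) A" "i \<in> A"
  shows "strict_antimono_on A (\<beta>(i := \<beta> i - 1))"
proof (rule monotone_onI)
  fix a b assume ab: "a \<in> A" "b \<in> A" "a < b"
  then have "\<beta> b < \<beta> a"
    using assms(1) by (simp add: monotone_on_def)
  moreover have "\<beta> b \<noteq> \<beta> i - 1" if "a = i"
  proof
    assume "\<beta> b = \<beta> i - 1"
    then have "(\<beta>(i := \<beta> i - 1)) a = (\<beta>(i := \<beta> i - 1)) b"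
      using ab that by simp
    then show False
      using inj_onD[OF assms(2)] ab by blast
  qed
  ultimately show "(\<beta>(i := \<beta> i - 1)) b < (\<beta>(i := \<beta> i - 1)) a"
    using ab by auto
qed

text \<open>The two families of permutations used below are all permutations of \<open>A = A'\<close>, and the
  permutations of \<open>S\<close> sending \<open>a\<close> to \<open>k\<close>, acting on the rows \<open>A = S - {a}\<close> with \<open>A' = S - {k}\<close>.\<close>
locale row_permutations =
  fixes A :: "nat set" and P :: "(nat \<Rightarrow> nat) set" and A' :: "nat set"
  assumes finite_rows: "finite A" and finite_perms: "finite P"
    and permutation: "\<sigma> \<in> P \<Longrightarrow> permutation \<sigma>"
    and comp_transpose_closed: "a \<in> A \<Longrightarrow> b \<in> A \<Longrightarrow> \<sigma> \<in> P \<Longrightarrow> \<sigma> \<circ> Transposition.transpose a b \<in> P"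
    and eq_if_eq_on_rows: "\<sigma> \<in> P \<Longrightarrow> \<tau> \<in> P \<Longrightarrow> (\<forall>i\<in>A. \<sigma> i = \<tau> i) \<Longrightarrow> \<sigma> = \<tau>"
    and image_rows: "\<sigma> \<in> P \<Longrightarrow> \<sigma> ` A = A'"
begin

lemma alternant_transpose:
  assumes "a \<in> A" "b \<in> A" "a \<noteq> b"
  shows "alternant l A P (\<beta> \<circ> Transposition.transpose a b) U = - alternant l A P \<beta> U"
proof -
  let ?t = "Transposition.transpose a b"
  have "alternant l A P (\<beta> \<circ> ?t) U
      = (\<Sum>\<sigma>\<in>P. sign \<sigma> * int (load_count U A ((\<lambda>i. \<beta> i - staircase l ((\<sigma> \<circ> ?t) i)) \<circ> ?t)))"
    unfolding alternant_def by (intro sum.cong refl) (simp add: comp_def)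
  also have "\<dots> = (\<Sum>\<sigma>\<in>P. - (sign (\<sigma> \<circ> ?t) * int (load_count U A (\<lambda>i. \<beta> i - staircase l ((\<sigma> \<circ> ?t) i)))))"
    using assms permutation
    by (intro sum.cong refl) (simp add: load_count_permute permutes_swap_id sign_compose
        permutation_swap_id sign_swap_id)
  also have "\<dots> = - alternant l A P \<beta> U"
    unfolding alternant_def sum_negf
    by (rule arg_cong[where f=uminus], rule sum.reindex_bij_witness[where i="\<lambda>\<sigma>. \<sigma> \<circ> ?t" and j="\<lambda>\<sigma>. \<sigma> \<circ> ?t"])
       (auto simp: comp_assoc comp_transpose_closed assms)
  finally show ?thesis .
qed

lemma alternant_eq_0_if_not_inj:
  assumes "\<not> inj_on \<beta> A"
  shows "alternant l A P \<beta> U = 0"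
proof -
  obtain a b where ab: "a \<in> A" "b \<in> A" "a \<noteq> b" "\<beta> a = \<beta> b"
    using assms unfolding inj_on_def by blast
  then have "\<beta> \<circ> Transposition.transpose a b = \<beta>"
    by (auto simp: fun_eq_iff transpose_def)
  then show ?thesis
    using alternant_transpose[OF ab(1-3), of l \<beta> U] by simp
qed

lemma alternant_empty_eq_sign:
  assumes "\<sigma> \<in> P" "\<forall>i\<in>A. \<beta> i = staircase l (\<sigma> i)"
  shows "alternant l A P \<beta> {} = sign \<sigma>"
proof -
  have "{\<tau>\<in>P. \<forall>i\<in>A. \<beta> i = staircase l (\<tau> i)} = {\<sigma>}"
    using assms eq_if_eq_on_rows by auto
  moreover have "alternant l A P \<beta> {} = (\<Sum>\<tau>\<in>P. if \<forall>i\<in>A. \<beta> i = staircase l (\<tau> i) then sign \<tau> else 0)"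
    unfolding alternant_def load_count_empty by (intro sum.cong) auto
  ultimately show ?thesis
    using finite_perms by (simp flip: sum.inter_filter)
qed

lemma abs_alternant_empty_le:
  "\<bar>alternant l A P \<beta> ({} :: 'a set set)\<bar>
    \<le> (if inj_on \<beta> A then int (lower_paths (\<beta> ` A) (staircase l ` A') 0) else 0)"
proof (cases "\<exists>\<sigma>\<in>P. \<forall>i\<in>A. \<beta> i = staircase l (\<sigma> i)")
  case True
  then obtain \<sigma> where \<sigma>: "\<sigma> \<in> P" "\<forall>i\<in>A. \<beta> i = staircase l (\<sigma> i)"
    by blast
  have "inj \<sigma>"
    using permutation[OF \<sigma>(1)] by (simp add: permutation_bijective bij_is_inj)
  then have "inj_on \<beta> A"
    using \<sigma>(2) by (auto simp: inj_on_def dest: injD)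
  moreover have "\<beta> ` A = staircase l ` A'"
    using \<sigma> image_rows[OF \<sigma>(1)] by (auto simp: image_iff)
  moreover have "alternant l A P \<beta> ({} :: 'a set set) = sign \<sigma>"
    by (rule alternant_empty_eq_sign[OF \<sigma>])
  ultimately show ?thesis
    by simp
next
  case False
  then have "alternant l A P \<beta> ({} :: 'a set set) = 0"
    by (intro alternant_empty_eq_0) auto
  then show ?thesis
    by simp
qed

lemma abs_alternant_le:
  fixes U :: "'a set set"
  assumes "finite U" "\<forall>c\<in>U. card c \<ge> 1"
  shows "\<bar>alternant l A P \<beta> U\<bar>
    \<le> (if inj_on \<beta> A then int (lower_paths (\<beta> ` A) (staircase l ` A') (sum card U)) else 0)"
  using assms
proof (induction U arbitrary: \<beta> rule: finite_induct)
  case empty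
  have "\<bar>alternant l A P \<beta> ({} :: 'a set set)\<bar>
      \<le> (if inj_on \<beta> A then int (lower_paths (\<beta> ` A) (staircase l ` A') 0) else 0)"
    by (rule abs_alternant_empty_le)
  then show ?case
    by (simp only: sum.empty)
next
  case (insert c U)
  show ?case
  proof (cases "inj_on \<beta> A")
    case False
    then show ?thesis
      using alternant_eq_0_if_not_inj by simp
  next
    case True
    define r where "r = card c"
    have r: "r \<ge> 1"
      using insert.prems r_def by simp
    let ?B = "staircase l ` A'" and ?m = "sum card U"
    have "\<bar>alternant l A P \<beta> (insert c U)\<bar> = \<bar>\<Sum>i\<in>A. alternant l A P (\<beta>(i := \<beta> i - int r)) U\<bar>"
      unfolding r_def using alternant_insert[OF insert.hyps(1,2) finite_rows] by simp
    also have "\<dots> \<le> (\<Sum>i\<in>A. \<bar>alternant l A P (\<beta>(i := \<beta> i - int r)) U\<bar>)"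
      by (rule sum_abs)
    also have "\<dots> \<le> (\<Sum>i\<in>A. if inj_on (\<beta>(i := \<beta> i - int r)) A
        then int (lower_paths ((\<beta>(i := \<beta> i - int r)) ` A) ?B ?m) else 0)"
      by (intro sum_mono insert.IH) (use insert.prems in auto)
    also have "\<dots> = (\<Sum>x\<in>{x\<in>\<beta> ` A. x - int r \<notin> \<beta> ` A}. int (lower_paths (lower (\<beta> ` A) x r) ?B ?m))"
      by (rule sum_update_image_lower[OF finite_rows True r])
    also have "\<dots> \<le> int (lower_paths (\<beta> ` A) ?B (r + ?m))"
      unfolding of_nat_sum[symmetric] of_nat_le_iff
      by (rule lower_paths_jumps_le[OF finite_imageI[OF finite_rows] r])
    also have "r + ?m = sum card (insert c U)"
      using insert.hyps r_def by simp
    finally show ?thesis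
      using True by simp
  qed
qed

lemma alternant_empty_eq_lower_paths:
  assumes "A' = A" "id \<in> P" "strict_antimono_on A \<beta>"
  shows "alternant l A P \<beta> ({} :: 'a set set) = int (lower_paths (\<beta> ` A) (staircase l ` A) 0)"
proof (cases "\<beta> ` A = staircase l ` A")
  case True
  have "strict_antimono_on A (staircase l)"
    by (auto simp: monotone_on_def staircase_def)
  then have "\<forall>i\<in>A. \<beta> i = staircase l (id i)"
    using strict_antimono_on_image_eq[OF finite_rows assms(3) _ True] by simp
  then have "alternant l A P \<beta> ({} :: 'a set set) = sign (id :: nat \<Rightarrow> nat)"
    by (rule alternant_empty_eq_sign[OF assms(2)])
  then show ?thesis
    using True by simp
next
  case False
  have "\<forall>\<sigma>\<in>P. \<exists>i\<in>A. \<beta> i \<noteq> staircase l (\<sigma> i)"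
  proof (rule ballI, rule ccontr)
    fix \<sigma> assume "\<sigma> \<in> P" "\<not> (\<exists>i\<in>A. \<beta> i \<noteq> staircase l (\<sigma> i))"
    then have "\<beta> ` A = staircase l ` \<sigma> ` A"
      by (auto simp: image_iff)
    then show False
      using False image_rows[OF \<open>\<sigma> \<in> P\<close>] assms(1) by simp
  qed
  then have "alternant l A P \<beta> ({} :: 'a set set) = 0"
    by (rule alternant_empty_eq_0)
  then show ?thesis
    using False by simp
qed

lemma alternant_eq_lower_paths:
  fixes U :: "'a set set"
  assumes "A' = A" "id \<in> P" "finite U" "\<forall>c\<in>U. card c = 1" "strict_antimono_on A \<beta>"
  shows "alternant l A P \<beta> U = int (lower_paths (\<beta> ` A) (staircase l ` A) (card U))"
  using assms(3-5)
proof (induction U arbitrary: \<beta> rule: finite_induct)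
  case empty
  have "alternant l A P \<beta> ({} :: 'a set set) = int (lower_paths (\<beta> ` A) (staircase l ` A) 0)"
    by (rule alternant_empty_eq_lower_paths[OF assms(1,2) empty.prems(2)])
  then show ?case
    by simp
next
  case (insert c U)
  let ?B = "staircase l ` A"
  have inj: "inj_on \<beta> A"
    using insert.prems(2) strict_antimono_iff_antimono by blast
  have "alternant l A P \<beta> (insert c U) = (\<Sum>i\<in>A. alternant l A P (\<beta>(i := \<beta> i - int 1)) U)"
    using alternant_insert[OF insert.hyps(1,2) finite_rows] insert.prems(1) by simp
  also have "\<dots> = (\<Sum>i\<in>A. if inj_on (\<beta>(i := \<beta> i - int 1)) A
      then int (lower_paths ((\<beta>(i := \<beta> i - int 1)) ` A) ?B (card U)) else 0)"
  proof (rule sum.cong[OF refl])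
    fix i assume "i \<in> A"
    show "alternant l A P (\<beta>(i := \<beta> i - int 1)) U = (if inj_on (\<beta>(i := \<beta> i - int 1)) A
        then int (lower_paths ((\<beta>(i := \<beta> i - int 1)) ` A) ?B (card U)) else 0)"
    proof (cases "inj_on (\<beta>(i := \<beta> i - int 1)) A")
      case True
      then have "strict_antimono_on A (\<beta>(i := \<beta> i - int 1))"
        using strict_antimono_on_fun_upd_decr[OF insert.prems(2)] \<open>i \<in> A\<close> by simp
      then show ?thesis
        using insert.IH insert.prems(1) True by simp
    next
      case False
      then show ?thesis
        using alternant_eq_0_if_not_inj by simp
    qed
  qed
  also have "\<dots> = (\<Sum>x\<in>{x\<in>\<beta> ` A. x - int 1 \<notin> \<beta> ` A}. int (lower_paths (lower (\<beta> ` A) x 1) ?B (card U)))"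
    by (rule sum_update_image_lower[OF finite_rows inj order_refl])
  also have "\<dots> = int (lower_paths (\<beta> ` A) ?B (card (insert c U)))"
    using insert.hyps by simp
  finally show ?case .
qed

end

lemma row_permutations_permutes:
  assumes "finite S"
  shows "row_permutations S {\<sigma>. \<sigma> permutes S} S"
proof
  show "finite {\<sigma>. \<sigma> permutes S}"
    by (rule finite_permutations[OF assms])
  show "permutation \<sigma>" if "\<sigma> \<in> {\<sigma>. \<sigma> permutes S}" for \<sigma>
    using that by (simp add: permutes_imp_permutation[OF assms])
  show "\<sigma> \<circ> Transposition.transpose x y \<in> {\<sigma>. \<sigma> permutes S}"
    if "x \<in> S" "y \<in> S" "\<sigma> \<in> {\<sigma>. \<sigma> permutes S}" for x y \<sigma>
    using that permutes_compose[OF permutes_swap_id[OF that(1,2)], of \<sigma>] by simp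
  show "\<sigma> = \<tau>" if "\<sigma> \<in> {\<sigma>. \<sigma> permutes S}" "\<tau> \<in> {\<sigma>. \<sigma> permutes S}" "\<forall>i\<in>S. \<sigma> i = \<tau> i" for \<sigma> \<tau>
  proof
    fix x show "\<sigma> x = \<tau> x"
      using that permutes_not_in[of \<sigma> S x] permutes_not_in[of \<tau> S x] by (cases "x \<in> S") auto
  qed
  show "\<sigma> ` S = S" if "\<sigma> \<in> {\<sigma>. \<sigma> permutes S}" for \<sigma>
    using that permutes_image by blast
qed (rule assms)

lemma row_permutations_mapping:
  assumes "finite S" "a \<in> S" "k \<in> S"
  shows "row_permutations (S - {a}) {\<sigma>. \<sigma> permutes S \<and> \<sigma> a = k} (S - {k})"
proof
  show "finite (S - {a})"
    using assms(1) by simp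
  show "finite {\<sigma>. \<sigma> permutes S \<and> \<sigma> a = k}"
    using finite_permutations[OF assms(1)] by (rule finite_subset[rotated]) auto
  show "permutation \<sigma>" if "\<sigma> \<in> {\<sigma>. \<sigma> permutes S \<and> \<sigma> a = k}" for \<sigma>
    using that by (simp add: permutes_imp_permutation[OF assms(1)])
  show "\<sigma> \<circ> Transposition.transpose x y \<in> {\<sigma>. \<sigma> permutes S \<and> \<sigma> a = k}"
    if "x \<in> S - {a}" "y \<in> S - {a}" "\<sigma> \<in> {\<sigma>. \<sigma> permutes S \<and> \<sigma> a = k}" for x y \<sigma>
  proof -
    have "Transposition.transpose x y a = a"
      using that(1,2) by simp
    then show ?thesis
      using that permutes_compose[OF permutes_swap_id[of x S y], of \<sigma>] by auto
  qed
  show "\<sigma> = \<tau>" if "\<sigma> \<in> {\<sigma>. \<sigma> permutes S \<and> \<sigma> a = k}" "\<tau> \<in> {\<sigma>. \<sigma> permutes S \<and> \<sigma> a = k}"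
    "\<forall>i\<in>S - {a}. \<sigma> i = \<tau> i" for \<sigma> \<tau>
  proof
    fix x show "\<sigma> x = \<tau> x"
      using that permutes_not_in[of \<sigma> S x] permutes_not_in[of \<tau> S x] by (cases "x \<in> S") auto
  qed
  show "\<sigma> ` (S - {a}) = S - {k}" if "\<sigma> \<in> {\<sigma>. \<sigma> permutes S \<and> \<sigma> a = k}" for \<sigma>
    using that image_set_diff[OF permutes_inj[of \<sigma> S], of S "{a}"] by (simp add: permutes_image)
qed

section \<open>Families of cycles\<close>

lemma card_add_card_le_sum_card:
  assumes "finite U" "\<forall>c\<in>U. card c \<ge> 1" "c \<in> U"
  shows "card c + card U \<le> sum card U + 1"
proof -
  have "card (U - {c}) \<le> sum card (U - {c})"
    using assms(2) sum_mono[of "U - {c}" "\<lambda>_. 1" card] by simp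
  moreover have "sum card U = card c + sum card (U - {c})" "card U = card (U - {c}) + 1"
    using assms(1,3) card.remove[OF assms(1,3)] by (simp_all add: sum.remove)
  ultimately show ?thesis
    by linarith
qed

lemma card_le_sum_card:
  assumes "finite U" "\<forall>c\<in>U. card c \<ge> 1"
  shows "card U \<le> sum card U"
  using assms sum_mono[of U "\<lambda>_. 1" card] by simp

lemma sum_card_eq_card_iff:
  assumes "finite U" "\<forall>c\<in>U. card c \<ge> 1"
  shows "sum card U = card U \<longleftrightarrow> (\<forall>c\<in>U. card c = 1)"
  using card_add_card_le_sum_card[OF assms] assms(2) by (fastforce simp: le_antisym)

lemma light_subfamilies_split:
  assumes "finite Cs" "\<forall>c\<in>Cs. card c \<ge> 1"
  shows "{U \<in> Pow Cs. sum card U \<le> \<Delta>}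
    = {U. U \<subseteq> {c\<in>Cs. card c = 1} \<and> card U = \<Delta>} \<union> {U \<in> Pow Cs. sum card U \<le> \<Delta> \<and> card U < \<Delta>}"
proof (intro equalityI subsetI)
  fix U assume "U \<in> {U \<in> Pow Cs. sum card U \<le> \<Delta>}"
  then have U: "U \<subseteq> Cs" "sum card U \<le> \<Delta>" and fin: "finite U" and pos: "\<forall>c\<in>U. card c \<ge> 1"
    using assms finite_subset by auto
  show "U \<in> {U. U \<subseteq> {c\<in>Cs. card c = 1} \<and> card U = \<Delta>} \<union> {U \<in> Pow Cs. sum card U \<le> \<Delta> \<and> card U < \<Delta>}"
  proof (cases "card U < \<Delta>")
    case False
    moreover have "card U \<le> sum card U"
      by (rule card_le_sum_card[OF fin pos])
    ultimately have "sum card U = card U" "card U = \<Delta>"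
      using U(2) by linarith+
    moreover have "\<forall>c\<in>U. card c = 1"
      using sum_card_eq_card_iff[OF fin pos] calculation(1) by blast
    ultimately show ?thesis
      using U(1) by blast
  next
    case True
    then show ?thesis
      using U by blast
  qed
next
  fix U assume "U \<in> {U. U \<subseteq> {c\<in>Cs. card c = 1} \<and> card U = \<Delta>} \<union> {U \<in> Pow Cs. sum card U \<le> \<Delta> \<and> card U < \<Delta>}"
  then consider (singletons) "U \<subseteq> {c\<in>Cs. card c = 1}" "card U = \<Delta>" | (light) "U \<in> Pow Cs" "sum card U \<le> \<Delta>"
    by blast
  then show "U \<in> {U \<in> Pow Cs. sum card U \<le> \<Delta>}"
  proof cases
    case singletons
    then have "sum card U = (\<Sum>c\<in>U. 1)"
      by (intro sum.cong) auto
    then show ?thesis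
      using singletons by auto
  qed simp
qed

lemma card_light_subfamilies_le:
  fixes Cs :: "'a set set"
  assumes "finite Cs" "\<forall>c\<in>Cs. card c \<ge> 1"
  shows "card {U \<in> Pow Cs. sum card U \<le> \<Delta> \<and> card U < \<Delta>}
    \<le> (\<Sum>j=1..\<Delta>. card {c\<in>Cs. card c \<le> j + 1} choose (\<Delta> - j))"
proof -
  define X where "X j = {U. U \<subseteq> {c\<in>Cs. card c \<le> j + 1} \<and> card U = \<Delta> - j}" for j
  have "{U \<in> Pow Cs. sum card U \<le> \<Delta> \<and> card U < \<Delta>} \<subseteq> (\<Union>j\<in>{1..\<Delta>}. X j)"
  proof
    fix U assume U: "U \<in> {U \<in> Pow Cs. sum card U \<le> \<Delta> \<and> card U < \<Delta>}"
    then have fin: "finite U" and pos: "\<forall>c\<in>U. card c \<ge> 1"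
      using assms finite_subset by auto
    have "card c \<le> \<Delta> - card U + 1" if "c \<in> U" for c
      using card_add_card_le_sum_card[OF fin pos that] U by auto
    then have "U \<in> X (\<Delta> - card U)"
      using U by (auto simp: X_def)
    then show "U \<in> (\<Union>j\<in>{1..\<Delta>}. X j)"
      using U by auto
  qed
  then have "card {U \<in> Pow Cs. sum card U \<le> \<Delta> \<and> card U < \<Delta>} \<le> card (\<Union>j\<in>{1..\<Delta>}. X j)"
    by (rule card_mono[rotated]) (use assms(1) in \<open>auto simp: X_def\<close>)
  also have "\<dots> \<le> (\<Sum>j=1..\<Delta>. card (X j))"
    by (rule card_UN_le) simp
  also have "\<dots> = (\<Sum>j=1..\<Delta>. card {c\<in>Cs. card c \<le> j + 1} choose (\<Delta> - j))"
    unfolding X_def using assms(1) by (simp add: n_subsets)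
  finally show ?thesis .
qed

lemma cycles_of_id: "cycles_of n id = (\<lambda>x. {x}) ` {..<n}"
proof -
  have "orbit id = (\<lambda>x::nat. {x})"
    by (rule ext) (simp add: orbit_eq_singleton_iff)
  then show ?thesis
    unfolding cycles_of_def by simp
qed

lemma cycle_subset:
  assumes "\<pi> permutes {..<n}" "c \<in> cycles_of n \<pi>"
  shows "c \<subseteq> {..<n}"
  using assms(2) permutes_orbit_subset[OF assms(1)] unfolding cycles_of_def by auto

lemma card_cycle_ge_1:
  assumes "\<pi> permutes {..<n}" "c \<in> cycles_of n \<pi>"
  shows "card c \<ge> 1"
proof -
  obtain x where "c = orbit \<pi> x"
    using assms(2) unfolding cycles_of_def by auto
  then have "x \<in> c"
    using permutation_self_in_orbit[OF permutes_imp_permutation[OF finite_lessThan assms(1)]] by simp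
  then show ?thesis
    using cycle_subset[OF assms] by (auto simp: Suc_le_eq card_gt_0_iff intro: finite_subset)
qed

lemma sum_card_cycles_of:
  assumes "\<pi> permutes {..<n}"
  shows "sum card (cycles_of n \<pi>) = n"
proof -
  have perm: "permutation \<pi>"
    using assms by (rule permutes_imp_permutation[OF finite_lessThan])
  have "\<Union>(cycles_of n \<pi>) = {..<n}"
    using cycle_subset[OF assms] permutation_self_in_orbit[OF perm] unfolding cycles_of_def by blast
  moreover have "pairwise disjnt (cycles_of n \<pi>)"
    unfolding cycles_of_def pairwise_def disjnt_def
    using orbit_cyclic_eq3[OF cyclic_on_orbit'[OF perm]] by blast
  moreover have "finite c" if "c \<in> cycles_of n \<pi>" for c
    using cycle_subset[OF assms that] by (rule finite_subset) simp
  ultimately show ?thesis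
    using card_Union_disjoint[of "cycles_of n \<pi>"] by fastforce
qed

lemma card_short_cycles:
  assumes "\<pi> permutes {..<n}"
  shows "card {c \<in> cycles_of n \<pi>. card c \<le> m} = (\<Sum>i=1..m. cyc_count n \<pi> i)"
proof -
  have "card {c \<in> cycles_of n \<pi>. card c \<le> m} = card (\<Union>i\<in>{1..m}. {c \<in> cycles_of n \<pi>. card c = i})"
    using card_cycle_ge_1[OF assms] by (intro arg_cong[where f=card]) fastforce
  also have "\<dots> = (\<Sum>i=1..m. card {c \<in> cycles_of n \<pi>. card c = i})"
    by (rule card_UN_disjoint) (auto simp: cycles_of_def)
  finally show ?thesis
    unfolding cyc_count_def .
qed

section \<open>Removing the first row\<close>

locale first_row =
  fixes lam :: "nat list" and n :: nat and \<pi> :: "nat \<Rightarrow> nat"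
  assumes partition: "is_partition lam n" and nonempty: "lam \<noteq> []" and perm: "\<pi> permutes {..<n}"
begin

abbreviation "l \<equiv> length lam"
abbreviation "\<Delta> \<equiv> sum_list (tl lam)"
abbreviation "Cs \<equiv> cycles_of n \<pi>"
abbreviation "rows \<equiv> {..<l} - {0}"

definition beta :: "nat \<Rightarrow> int" where
  "beta i = int (lam ! i) + staircase l i"

text \<open>By \<open>character_tl_id\<close> this is \<open>\<chi>\<^sub>\<mu>(1)\<close>, the number of standard Young tableaux of \<open>\<mu> = tl lam\<close>.\<close>
abbreviation "syt \<equiv> lower_paths (beta ` rows) (staircase l ` rows) \<Delta>"

lemma length_pos: "0 < l"
  using nonempty by simp

lemma n_eq: "n = lam ! 0 + \<Delta>"
  using partition nonempty unfolding is_partition_def by (cases lam) auto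

lemma strict_antimono_beta: "strict_antimono_on {..<l} beta"
proof (rule monotone_onI)
  fix i j assume "i \<in> {..<l}" "j \<in> {..<l}" "i < j"
  then have "lam ! j \<le> lam ! i"
    using partition unfolding is_partition_def by (auto intro: sorted_wrt_nth_less)
  then show "beta j < beta i"
    using \<open>i < j\<close> by (simp add: beta_def staircase_def)
qed

lemma cycle_card_ge_1: "\<forall>c\<in>Cs. card c \<ge> 1"
  using card_cycle_ge_1[OF perm] by blast

lemma finite_cycles: "finite Cs"
  unfolding cycles_of_def by simp

lemma character_tl_id: "character (tl lam) id = int syt"
proof -
  define l' where "l' = length (tl lam)"
  define beta' where "beta' i = int (tl lam ! i) + staircase l' i" for i
  obtain a xs where lam: "lam = a # xs"
    using nonempty by (cases lam) auto
  have shift: "beta' i = beta (Suc i)" "staircase l' i = staircase l (Suc i)" for i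
    unfolding beta_def beta'_def l'_def staircase_def by (simp_all add: lam)
  have rows: "Suc ` {..<l'} = rows"
    by (auto simp: lam l'_def lessThan_Suc_eq_insert_0)
  interpret row_permutations "{..<l'}" "{\<sigma>. \<sigma> permutes {..<l'}}" "{..<l'}"
    by (rule row_permutations_permutes) simp
  have "strict_antimono_on {..<l'} beta'"
    using strict_antimono_beta by (auto simp: monotone_on_def shift l'_def)
  then have "alternant l' {..<l'} {\<sigma>. \<sigma> permutes {..<l'}} beta' (cycles_of \<Delta> id)
      = int (lower_paths (beta' ` {..<l'}) (staircase l' ` {..<l'}) (card (cycles_of \<Delta> id)))"
    by (intro alternant_eq_lower_paths) (auto simp: cycles_of_id)
  moreover have "card (cycles_of \<Delta> id) = \<Delta>"
    unfolding cycles_of_id by (simp add: card_image)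
  moreover have "beta' ` {..<l'} = beta ` rows" "staircase l' ` {..<l'} = staircase l ` rows"
    unfolding rows[symmetric] image_image shift by simp_all
  ultimately show ?thesis
    unfolding character_def Let_def frob_count_eq_load_count alternant_def beta'_def staircase_def l'_def
    by simp
qed

text \<open>Row \<open>0\<close> receives the cycles outside \<open>U\<close>, and its load \<open>\<lambda>\<^sub>1 + \<sigma>(0)\<close> forces \<open>\<sigma>(0) = \<Delta> - \<parallel>U\<parallel>\<close>.\<close>
lemma first_row_load_iff:
  assumes "U \<subseteq> Cs"
  shows "int (sum card (Cs - U)) = beta 0 - staircase l k \<longleftrightarrow> sum card U \<le> \<Delta> \<and> k = \<Delta> - sum card U"
proof -
  have "sum card (Cs - U) + sum card U = lam ! 0 + \<Delta>"
    using assms finite_cycles sum_card_cycles_of[OF perm] n_eq by (metis sum.subset_diff)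
  moreover have "beta 0 - staircase l k = int (lam ! 0) + int k"
    by (simp add: beta_def staircase_def)
  ultimately show ?thesis
    by arith
qed

lemma character_eq_sum_alternant:
  "character lam \<pi> = (\<Sum>U\<in>{U\<in>Pow Cs. sum card U \<le> \<Delta>}.
     alternant l rows {\<sigma>. \<sigma> permutes {..<l} \<and> \<sigma> 0 = \<Delta> - sum card U} beta U)"
proof -
  let ?Perm = "{\<sigma>. \<sigma> permutes {..<l}}"
  let ?load = "\<lambda>\<sigma> U. load_count U rows (\<lambda>i. beta i - staircase l (\<sigma> i))"
  have "sum_list lam = n"
    using partition unfolding is_partition_def by simp
  then have "character lam \<pi> = (\<Sum>\<sigma>\<in>?Perm. sign \<sigma> * int (load_count Cs {..<l} (\<lambda>i. beta i - staircase l (\<sigma> i))))"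
    unfolding character_def Let_def frob_count_eq_load_count beta_def staircase_def by simp
  also have "\<dots> = (\<Sum>\<sigma>\<in>?Perm. sign \<sigma> * int (\<Sum>U\<in>Pow Cs.
      if int (sum card (Cs - U)) = beta 0 - staircase l (\<sigma> 0) then ?load \<sigma> U else 0))"
    using finite_cycles length_pos by (subst load_count_split_row) auto
  also have "\<dots> = (\<Sum>\<sigma>\<in>?Perm. \<Sum>U\<in>Pow Cs. if sum card U \<le> \<Delta> \<and> \<sigma> 0 = \<Delta> - sum card U
      then sign \<sigma> * int (?load \<sigma> U) else 0)"
    unfolding of_nat_sum[where A = "Pow Cs"] sum_distrib_left
    by (intro sum.cong refl) (simp del: of_nat_sum add: first_row_load_iff)
  also have "\<dots> = (\<Sum>U\<in>Pow Cs. \<Sum>\<sigma>\<in>?Perm. if sum card U \<le> \<Delta> \<and> \<sigma> 0 = \<Delta> - sum card U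
      then sign \<sigma> * int (?load \<sigma> U) else 0)"
    by (rule sum.swap)
  also have "\<dots> = (\<Sum>U\<in>Pow Cs. if sum card U \<le> \<Delta>
      then alternant l rows {\<sigma>. \<sigma> permutes {..<l} \<and> \<sigma> 0 = \<Delta> - sum card U} beta U else 0)"
  proof (rule sum.cong[OF refl])
    fix U :: "nat set set"
    have "{\<sigma>\<in>?Perm. \<sigma> 0 = \<Delta> - sum card U} = {\<sigma>. \<sigma> permutes {..<l} \<and> \<sigma> 0 = \<Delta> - sum card U}"
      by auto
    then show "(\<Sum>\<sigma>\<in>?Perm. if sum card U \<le> \<Delta> \<and> \<sigma> 0 = \<Delta> - sum card U then sign \<sigma> * int (?load \<sigma> U) else 0)
        = (if sum card U \<le> \<Delta> then alternant l rows {\<sigma>. \<sigma> permutes {..<l} \<and> \<sigma> 0 = \<Delta> - sum card U} beta U else 0)"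
      unfolding alternant_def
      by (cases "sum card U \<le> \<Delta>")
        (simp_all add: sum.inter_filter[OF finite_permutations[OF finite_lessThan], symmetric])
  qed
  also have "\<dots> = (\<Sum>U\<in>{U\<in>Pow Cs. sum card U \<le> \<Delta>}.
      alternant l rows {\<sigma>. \<sigma> permutes {..<l} \<and> \<sigma> 0 = \<Delta> - sum card U} beta U)"
    by (rule sum.inter_filter[symmetric]) (simp add: finite_cycles)
  finally show ?thesis .
qed

lemma alternant_fixed_points:
  assumes "U \<subseteq> {c\<in>Cs. card c = 1}" "card U = \<Delta>"
  shows "alternant l rows {\<sigma>. \<sigma> permutes {..<l} \<and> \<sigma> 0 = \<Delta> - sum card U} beta U = int syt"
proof -
  interpret row_permutations rows "{\<sigma>. \<sigma> permutes {..<l} \<and> \<sigma> 0 = 0}" rows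
    using length_pos by (intro row_permutations_mapping) auto
  have "finite U"
    using assms(1) finite_cycles by (auto intro: finite_subset)
  moreover have "strict_antimono_on rows beta"
    using strict_antimono_beta by (auto simp: monotone_on_def)
  ultimately have "alternant l rows {\<sigma>. \<sigma> permutes {..<l} \<and> \<sigma> 0 = 0} beta U
      = int (lower_paths (beta ` rows) (staircase l ` rows) (card U))"
    using assms(1) by (intro alternant_eq_lower_paths) auto
  moreover have "sum card U = (\<Sum>c\<in>U. 1)"
    using assms(1) by (intro sum.cong) auto
  ultimately show ?thesis
    using assms(2) by simp
qed

lemma abs_alternant_le_syt:
  assumes "U \<subseteq> Cs" "sum card U \<le> \<Delta>"
  shows "\<bar>alternant l rows {\<sigma>. \<sigma> permutes {..<l} \<and> \<sigma> 0 = \<Delta> - sum card U} beta U\<bar> \<le> int syt"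
proof (cases "\<Delta> - sum card U < l")
  case True
  define k where "k = \<Delta> - sum card U"
  interpret row_permutations rows "{\<sigma>. \<sigma> permutes {..<l} \<and> \<sigma> 0 = k}" "{..<l} - {k}"
    using True length_pos by (intro row_permutations_mapping) (auto simp: k_def)
  have "finite U" "\<forall>c\<in>U. card c \<ge> 1"
    using assms(1) finite_cycles cycle_card_ge_1 by (auto intro: finite_subset)
  then have "\<bar>alternant l rows {\<sigma>. \<sigma> permutes {..<l} \<and> \<sigma> 0 = k} beta U\<bar>
      \<le> int (lower_paths (beta ` rows) (staircase l ` ({..<l} - {k})) (sum card U))"
    using abs_alternant_le[of U l beta] by (auto split: if_splits)
  also have "\<dots> \<le> int (lower_paths (beta ` rows) (staircase l ` rows) (sum card U + k))"
    using lower_paths_le_concat lower_paths_staircase_hole True by (simp add: k_def)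
  also have "sum card U + k = \<Delta>"
    using assms(2) by (simp add: k_def)
  finally show ?thesis
    by (simp add: k_def)
next
  case False
  have "\<sigma> 0 < l" if "\<sigma> permutes {..<l}" for \<sigma>
    using permutes_in_image[OF that, of 0] length_pos by simp
  then have no_perms: "{\<sigma>. \<sigma> permutes {..<l} \<and> \<sigma> 0 = \<Delta> - sum card U} = {}"
    using False by fastforce
  show ?thesis
    unfolding alternant_def no_perms by simp
qed

theorem character_approx:
  "\<bar>character lam \<pi> - character (tl lam) id * int (cyc_count n \<pi> 1 choose \<Delta>)\<bar>
    \<le> character (tl lam) id * int (\<Sum>j=1..\<Delta>. (\<Sum>i=1..j+1. cyc_count n \<pi> i) choose (\<Delta> - j))"
proof -
  define summand where "summand U = alternant l rows {\<sigma>. \<sigma> permutes {..<l} \<and> \<sigma> 0 = \<Delta> - sum card U} beta U"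
    for U :: "nat set set"
  define Main where "Main = {U. U \<subseteq> {c\<in>Cs. card c = 1} \<and> card U = \<Delta>}"
  define Rest where "Rest = {U \<in> Pow Cs. sum card U \<le> \<Delta> \<and> card U < \<Delta>}"
  have "{U\<in>Pow Cs. sum card U \<le> \<Delta>} = Main \<union> Rest"
    unfolding Main_def Rest_def by (rule light_subfamilies_split[OF finite_cycles cycle_card_ge_1])
  moreover have "Main \<inter> Rest = {}" "finite Main" "finite Rest"
    using finite_cycles by (auto simp: Main_def Rest_def intro: finite_subset)
  ultimately have "character lam \<pi> = sum summand Main + sum summand Rest"
    unfolding character_eq_sum_alternant summand_def by (simp add: sum.union_disjoint)
  moreover have "sum summand Main = int (cyc_count n \<pi> 1 choose \<Delta>) * int syt"
  proof -
    have "sum summand Main = (\<Sum>U\<in>Main. int syt)"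
      using alternant_fixed_points by (auto simp: summand_def Main_def)
    moreover have "card Main = cyc_count n \<pi> 1 choose \<Delta>"
      using finite_cycles by (simp add: Main_def cyc_count_def n_subsets)
    ultimately show ?thesis
      by simp
  qed
  moreover have "\<bar>sum summand Rest\<bar> \<le> int (\<Sum>j=1..\<Delta>. (\<Sum>i=1..j+1. cyc_count n \<pi> i) choose (\<Delta> - j)) * int syt"
  proof -
    have "\<bar>sum summand Rest\<bar> \<le> (\<Sum>U\<in>Rest. int syt)"
      using abs_alternant_le_syt by (intro order.trans[OF sum_abs sum_mono]) (auto simp: summand_def Rest_def)
    also have "\<dots> = int (card Rest) * int syt"
      by simp
    also have "card Rest \<le> (\<Sum>j=1..\<Delta>. (\<Sum>i=1..j+1. cyc_count n \<pi> i) choose (\<Delta> - j))"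
      using card_light_subfamilies_le[OF finite_cycles cycle_card_ge_1] card_short_cycles[OF perm]
      by (simp add: Rest_def)
    finally show ?thesis
      by (simp add: mult_right_mono)
  qed
  ultimately show ?thesis
    using character_tl_id by (simp add: mult.commute)
qed

end

theorem lemma2p2:
  shows "\<exists>C::real. C > 0 \<and>
    (\<forall>n lam \<pi>. is_partition lam n \<longrightarrow> lam \<noteq> [] \<longrightarrow> \<pi> permutes {..<n} \<longrightarrow>
      (let \<mu> = tl lam; \<Delta> = sum_list \<mu>; c = cyc_count n \<pi>;
           d = real_of_int (character \<mu> id) in
       \<bar>real_of_int (character lam \<pi>) - d * real (c 1 choose \<Delta>)\<bar>
         \<le> C * d * (\<Sum>j=1..\<Delta>. real ((\<Sum>i=1..j+1. c i) choose (\<Delta> - j)))))"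
proof (intro exI[of _ 1] conjI allI impI)
  fix n lam \<pi>
  assume "is_partition lam n" "lam \<noteq> []" "\<pi> permutes {..<n}"
  then interpret first_row lam n \<pi>
    by unfold_locales
  show "let \<mu> = tl lam; \<Delta> = sum_list \<mu>; c = cyc_count n \<pi>; d = real_of_int (character \<mu> id) in
      \<bar>real_of_int (character lam \<pi>) - d * real (c 1 choose \<Delta>)\<bar>
        \<le> 1 * d * (\<Sum>j=1..\<Delta>. real ((\<Sum>i=1..j+1. c i) choose (\<Delta> - j)))"
    using character_approx[THEN of_int_le_iff[THEN iffD2]] by (simp add: Let_def)
qed simp

end
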